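(* Let $p:\mathbb{R}\to\mathbb{R}$ be locally integrable, $\pi$-periodic, with $p_\alpha>0$ for almost all $\alpha$, and put $p_{\alpha,\beta}=p_\alpha p_\beta$. Let $\nu:\mathbb{R}\to\mathbb{R}$ be the unique bi-Lipschitz function with $\nu(0)=0$ and $\nu'(\alpha)=p_\alpha\bigl(\tfrac1{2\pi}\int_0^{2\pi}p_\beta\,d\beta\bigr)^{-1}$ for almost all $\alpha$. Then the path $\gamma(\alpha)=e^{i\nu(\alpha)}$ belongs to $B^\infty_{\rm ap}(\mathbb{R},\mathbb{R}^2)$ and \[ \omega_p(\gamma)=\sup_{\delta\in B^\infty_{\rm ap}(\mathbb{R},\mathbb{R}^2)}\omega_p(\delta)=\operatorname{Area}(\sigma|_{[0,2\pi]})=\frac1{4\pi}\Bigl(\int_0^{2\pi}p_\alpha\,d\alpha\Bigr)^2, \] where $\sigma(\alpha)=\frac12\int_\alpha^{\alpha+\pi}p_\beta\gamma(\beta)\,d\beta$. Moreover, every maximizer of $\omega_p$ on $B^\infty_{\rm ap}(\mathbb{R},\mathbb{R}^2)$ is of the form $\alpha\mapsto e^{i\nu(\alpha)+ic}$ for some $c\in\mathbb{R}$, and satisfies $|\gamma'(\alpha)|=\nu'(\alpha)=p_\alpha\bigl(\frac1{2\pi}\int_0^{2\pi}p_\beta\,d\beta\bigr)^{-1}$ for almost all $\alpha$.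
   Context: $\mathbb{R}^2$ is identified with $\mathbb{C}$, and for $v,w\in\mathbb{R}^2$, $v\times w=v_1w_2-v_2w_1$. $L^\infty_{\rm ap}(\mathbb{R},\mathbb{R}^2)$ is the space of essentially bounded measurable $\gamma:\mathbb{R}\to\mathbb{R}^2$ with $\gamma(\alpha+\pi)=-\gamma(\alpha)$ for all $\alpha$. $B^\infty_{\rm ap}(\mathbb{R},\mathbb{R}^2)$ is the subset with $\|\gamma_1^2+\gamma_2^2\|_\infty\le1$. For such $\gamma$, \[ \omega_p(\gamma)=\int_0^\pi\int_\alpha^\pi p_{\alpha,\beta}\,\gamma(\alpha)\times\gamma(\beta)\,d\beta\,d\alpha. \] For a Lipschitz path $\sigma$, $\operatorname{Area}(\sigma|_{[0,2\pi]})=\frac12\int_0^{2\pi}\sigma(\alpha)\times\sigma'(\alpha)\,d\alpha$ is the signed enclosed area. *)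

theory Defs
  imports "HOL-Analysis.Analysis"
begin

text \<open>R^2 is identified with the complex plane; the planar cross product.\<close>
definition cross2 :: "complex \<Rightarrow> complex \<Rightarrow> real" where
  "cross2 v w = Re v * Im w - Im v * Re w"

definition Bap :: "(real \<Rightarrow> complex) set" where
  "Bap = {g. g \<in> borel_measurable lebesgue
             \<and> (AE x in lebesgue. (Re (g x))\<^sup>2 + (Im (g x))\<^sup>2 \<le> 1)
             \<and> (\<forall>a. g (a + pi) = - g a)}"

definition omega :: "(real \<Rightarrow> real) \<Rightarrow> (real \<Rightarrow> complex) \<Rightarrow> real" where
  "omega p g = (\<integral>a\<in>{0..pi}. (\<integral>b\<in>{a..pi}. p a * p b * cross2 (g a) (g b) \<partial>lebesgue) \<partial>lebesgue)"

definition area02pi :: "(real \<Rightarrow> complex) \<Rightarrow> real" where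
  "area02pi s = (1/2) * (\<integral>a\<in>{0..2*pi}. cross2 (s a) (vector_derivative s (at a)) \<partial>lebesgue)"

end

(*
  Substituting s = nu(a), where nu' = p/m with m the mean of p over a period, turns the weight p
  into the constant m: omega_p(d) is m^2 times the integral over [0, pi] of
  cross(g(s), integral of g over [s, pi]), where g = d o nu^-1 is again bounded by 1.
  With H the antiperiodic primitive of -g, the identity
  cross(a, b) = (|a|^2 + |b|^2)/2 - |b - i a|^2/2 and Wirtinger's inequality for H bound this
  integral by pi, with equality only if |g| = 1 and H = i g almost everywhere. Then H' = i H,
  so H and g are rotations of exp(i s), i.e. d = exp(i (nu + c)). For the maximiser gamma the
  half-turn averages sigma are i m gamma, whose enclosed area is m^2 pi as well.
*)
theory Submission
  imports Defs "HOL-Library.Periodic_Fun"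
begin

section \<open>Integrals and null sets\<close>

lemma absolutely_integrable_on_bounded_measurable:
  fixes f :: "real \<Rightarrow> 'a::euclidean_space"
  assumes "f \<in> borel_measurable (lebesgue_on {a..b})" "\<And>x. x \<in> {a..b} \<Longrightarrow> norm (f x) \<le> B"
  shows "f absolutely_integrable_on {a..b}"
  by (rule measurable_bounded_by_integrable_imp_absolutely_integrable[OF assms(1) _ _ assms(2)]) auto

lemma dominated_convergence_off_negligible:
  fixes f :: "nat \<Rightarrow> 'n::euclidean_space \<Rightarrow> 'm::euclidean_space"
  assumes "\<And>k. f k integrable_on S" "h integrable_on S" "\<And>k x. x \<in> S \<Longrightarrow> norm (f k x) \<le> h x"
    and N: "negligible N" and "\<And>x. x \<in> S - N \<Longrightarrow> (\<lambda>k. f k x) \<longlonglongrightarrow> g x"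
  shows "(\<lambda>k. integral S (f k)) \<longlonglongrightarrow> integral S g"
proof -
  have same_set: "negligible {x \<in> S - (S - N). P x}" "negligible {x \<in> (S - N) - S. P x}" for P
    by (rule negligible_subset[OF N]; auto)+
  have "(\<lambda>k. integral (S - N) (f k)) \<longlonglongrightarrow> integral (S - N) g"
  proof (rule dominated_convergence(2))
    show "f k integrable_on S - N" for k
      using assms(1) same_set by (rule integrable_spike_set)
    show "h integrable_on S - N"
      using assms(2) same_set by (rule integrable_spike_set)
  qed (use assms(3,5) in auto)
  moreover have "integral (S - N) F = integral S F" for F :: "'n \<Rightarrow> 'm"
    by (rule integral_spike_set[OF same_set(2,1)])
  ultimately show ?thesis
    by simp
qed

lemma negligible_nonzero_of_integral_eq_0:
  fixes f :: "'n::euclidean_space \<Rightarrow> real"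
  assumes f: "f absolutely_integrable_on S" and nonneg: "AE x in lebesgue. x \<in> S \<longrightarrow> 0 \<le> f x"
    and zero: "integral S f = 0"
  shows "negligible {x \<in> S. f x \<noteq> 0}"
proof -
  have "integral\<^sup>L lebesgue (\<lambda>x. indicator S x *\<^sub>R f x) = 0"
    using set_lebesgue_integral_eq_integral(2)[OF f] zero by (simp add: set_lebesgue_integral_def)
  then have "AE x in lebesgue. indicator S x *\<^sub>R f x = 0"
    using f nonneg
    by (subst (asm) integral_nonneg_eq_0_iff_AE) (auto simp: set_integrable_def indicator_def)
  then obtain N where N: "negligible N" and sub: "{x. indicator S x *\<^sub>R f x \<noteq> 0} \<subseteq> N"
    unfolding eventually_ae_filter_negligible by blast
  show ?thesis
    by (rule negligible_subset[OF N]) (use sub in \<open>auto simp: indicator_def\<close>)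
qed

lemma not_negligible_interval: "a < b \<Longrightarrow> \<not> negligible {a..b::real}"
  using negligible_interval(1)[of a b] by auto

lemma integral_pos_of_AE_pos:
  fixes f :: "real \<Rightarrow> real"
  assumes f: "f absolutely_integrable_on {a..b}" and "a < b" and pos: "AE x in lebesgue. 0 < f x"
  shows "0 < integral {a..b} f"
proof -
  have "integral {a..b} f = integral\<^sup>L lebesgue (\<lambda>x. indicator {a..b} x *\<^sub>R f x)"
    by (simp add: set_lebesgue_integral_eq_integral(2)[OF f, symmetric] set_lebesgue_integral_def)
  also have "0 \<le> \<dots>"
    using pos by (intro integral_nonneg_AE) (auto simp: indicator_def elim: eventually_mono)
  finally have "0 \<le> integral {a..b} f" .
  moreover have "integral {a..b} f \<noteq> 0"
  proof
    assume "integral {a..b} f = 0"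
    then have "negligible {x \<in> {a..b}. f x \<noteq> 0}"
      using f pos by (intro negligible_nonzero_of_integral_eq_0) (auto elim: eventually_mono)
    moreover obtain N where "negligible N" "{x. \<not> 0 < f x} \<subseteq> N"
      using pos unfolding eventually_ae_filter_negligible by blast
    ultimately have "negligible ({x \<in> {a..b}. f x \<noteq> 0} \<union> N)"
      using negligible_Un by blast
    then have "negligible {a..b}"
      by (rule negligible_subset) (use \<open>{x. \<not> 0 < f x} \<subseteq> N\<close> in force)
    then show False
      using not_negligible_interval \<open>a < b\<close> by blast
  qed
  ultimately show ?thesis
    by simp
qed

lemma
  assumes "S \<subseteq> T" and "negligible (T - S)"
  shows negligible_spike_set_left: "negligible {x \<in> S - T. P x}"
    and negligible_spike_set_right: "negligible {x \<in> T - S. P x}"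
  using assms by (auto intro: negligible_subset[OF assms(2)])

lemma negligible_Lipschitz_image:
  fixes f :: "real \<Rightarrow> real"
  assumes "negligible S" and lipschitz: "\<And>x y. x \<in> S \<Longrightarrow> y \<in> S \<Longrightarrow> \<bar>f x - f y\<bar> \<le> L * \<bar>x - y\<bar>"
  shows "negligible (f ` S)"
proof (rule negligible_locally_Lipschitz_image[OF _ assms(1)])
  fix x assume "x \<in> S"
  then show "\<exists>T B. open T \<and> x \<in> T \<and> (\<forall>y\<in>S \<inter> T. norm (f y - f x) \<le> B * norm (y - x))"
    using lipschitz by (intro exI[of _ UNIV] exI[of _ L]) auto
qed auto

lemma negligible_if_periodic:
  fixes B :: "real set"
  assumes periodic: "\<And>x. x + pi \<in> B \<longleftrightarrow> x \<in> B" and negligible: "negligible (B \<inter> {0..pi})"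
  shows "negligible B"
proof -
  interpret periodic_fun_simple "\<lambda>x. x \<in> B" pi
    by standard (rule periodic)
  have "B \<subseteq> (\<Union>k::int. (+) (of_int k * pi) ` (B \<inter> {0..pi}))"
  proof
    fix x assume x: "x \<in> B"
    define k where "k = \<lfloor>x / pi\<rfloor>"
    have "of_int k * pi \<le> x" "x \<le> of_int k * pi + pi"
      using floor_divide_lower[of pi x] floor_divide_upper[of pi x] pi_gt_zero
      by (auto simp: k_def algebra_simps)
    moreover have "x - of_int k * pi \<in> B"
      using x minus_of_int[of x k] by simp
    ultimately show "x \<in> (\<Union>k::int. (+) (of_int k * pi) ` (B \<inter> {0..pi}))"
      by (intro UN_I[of k]) (auto intro: image_eqI[of _ _ "x - of_int k * pi"])
  qed
  moreover have "negligible (\<Union>k::int. (+) (of_int k * pi) ` (B \<inter> {0..pi}))"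
    using negligible by (intro negligible_countable_Union) (auto intro: negligible_translation)
  ultimately show ?thesis
    using negligible_subset by blast
qed

lemma AE_eq_if_antiperiodic:
  fixes d e :: "real \<Rightarrow> 'a::real_vector"
  assumes "\<And>x. d (x + pi) = - d x" "\<And>x. e (x + pi) = - e x"
    and N: "negligible N" and eq: "\<And>x. x \<in> {0..pi} - N \<Longrightarrow> d x = e x"
  shows "AE x in lebesgue. d x = e x"
proof -
  have "negligible {x. d x \<noteq> e x}"
  proof (rule negligible_if_periodic)
    show "x + pi \<in> {x. d x \<noteq> e x} \<longleftrightarrow> x \<in> {x. d x \<noteq> e x}" for x
      using assms(1,2) by simp
    show "negligible ({x. d x \<noteq> e x} \<inter> {0..pi})"
      by (rule negligible_subset[OF N]) (use eq in blast)
  qed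
  then show ?thesis
    unfolding eventually_ae_filter_negligible by blast
qed

lemma has_vector_derivative_linear_imp_exp:
  fixes H :: "real \<Rightarrow> complex"
  assumes H': "\<And>t. t \<in> {a..b} \<Longrightarrow> (H has_vector_derivative k * H t) (at t within {a..b})"
    and s: "s \<in> {a..b}"
  shows "H s = exp (k * of_real (s - a)) * H a"
proof -
  define K where "K t = exp (- k * of_real t) * H t" for t
  have "(K has_vector_derivative 0) (at t within {a..b})" if "t \<in> {a..b}" for t
  proof -
    have "((\<lambda>t. exp (- k * of_real t)) has_vector_derivative - k * exp (- k * of_real t)) (at t within {a..b})"
      by (rule has_vector_derivative_real_field) (auto intro!: derivative_eq_intros)
    from has_vector_derivative_mult[OF this H'[OF that]] show ?thesis
      unfolding K_def by (simp add: algebra_simps)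
  qed
  then obtain c where "\<And>t. t \<in> {a..b} \<Longrightarrow> K t = c"
    by (rule has_vector_derivative_zero_constant[rotated]) auto
  then have "K s = K a"
    using s by auto
  then show ?thesis
    by (simp add: K_def algebra_simps exp_diff exp_minus field_simps)
qed

lemma integral_exp_i:
  assumes "a \<le> b"
  shows "integral {a..b} (\<lambda>t. exp (\<i> * of_real t)) = - \<i> * (exp (\<i> * of_real b) - exp (\<i> * of_real a))"
proof -
  have "((\<lambda>t. - \<i> * exp (\<i> * of_real t)) has_vector_derivative exp (\<i> * of_real t)) (at t within {a..b})"
    for t
    by (rule has_vector_derivative_real_field) (auto intro!: derivative_eq_intros simp: mult.assoc)
  then have "((\<lambda>t. exp (\<i> * of_real t)) has_integral
      (- \<i> * exp (\<i> * of_real b) - (- \<i> * exp (\<i> * of_real a)))) {a..b}"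
    using assms by (intro fundamental_theorem_of_calculus) auto
  then show ?thesis
    by (simp add: integral_unique algebra_simps)
qed

section \<open>Wirtinger's inequality for antiperiodic functions\<close>

lemma cot_has_real_derivative_within:
  assumes "sin x \<noteq> 0"
  shows "(cot has_real_derivative - (1 + (cot x)\<^sup>2)) (at x within S)"
proof -
  have "inverse ((sin x)\<^sup>2) = 1 + (cot x)\<^sup>2"
    using assms sin_cos_squared_add[of x] by (simp add: cot_def field_simps power2_eq_square)
  then show ?thesis
    using DERIV_cot[OF assms] by (simp add: has_field_derivative_at_within)
qed

lemma cot_weighted_energy_bound:
  fixes u w :: "real \<Rightarrow> real"
  assumes "a \<le> b" and sin_pos: "\<And>t. t \<in> {a..b} \<Longrightarrow> 0 < sin (l*t + k)"
    and u': "\<And>t. t \<in> {a..b} \<Longrightarrow> (u has_real_derivative w t) (at t within {a..b})"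
    and cont_w: "continuous_on {a..b} w"
  shows "l * cot (l*b + k) * (u b)\<^sup>2 - l * cot (l*a + k) * (u a)\<^sup>2
           \<le> integral {a..b} (\<lambda>t. (w t)\<^sup>2 - l\<^sup>2 * (u t)\<^sup>2)"
proof -
  txt \<open>With \<open>c t = cot (l*t + k)\<close>: \<open>w\<^sup>2 - l\<^sup>2 u\<^sup>2 = (l c u\<^sup>2)' + (w - l c u)\<^sup>2\<close>.\<close>
  define c where "c t = cot (l*t + k)" for t
  define F' where "F' t = - l\<^sup>2 * (1 + (c t)\<^sup>2) * (u t)\<^sup>2 + 2 * l * c t * u t * w t" for t
  define R where "R t = (w t - l * c t * u t)\<^sup>2" for t
  have sin_nz: "sin (l*t + k) \<noteq> 0" if "t \<in> {a..b}" for t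
    using sin_pos[OF that] by simp
  have c': "(c has_real_derivative - (1 + (c t)\<^sup>2) * l) (at t within {a..b})" if "t \<in> {a..b}" for t
    unfolding c_def
    by (rule DERIV_chain2[where g="\<lambda>t. l*t + k" and x=t,
           OF cot_has_real_derivative_within[OF sin_nz[OF that], where S=UNIV]])
       (auto intro!: derivative_eq_intros)
  have F: "((\<lambda>t. l * c t * (u t)\<^sup>2) has_real_derivative F' t) (at t within {a..b})"
    if "t \<in> {a..b}" for t
    unfolding F'_def
    by (rule derivative_eq_intros c' u' that refl)+ (simp add: algebra_simps power2_eq_square)
  have "(F' has_integral (l * c b * (u b)\<^sup>2 - l * c a * (u a)\<^sup>2)) {a..b}"
    using assms(1) F
    by (intro fundamental_theorem_of_calculus) (auto simp: has_real_derivative_iff_has_vector_derivative)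
  moreover have "continuous_on {a..b} u"
    using u' by (meson DERIV_continuous continuous_on_eq_continuous_within)
  then have "continuous_on {a..b} R"
    unfolding R_def c_def cot_def using cont_w sin_nz by (auto intro!: continuous_intros)
  then have "(R has_integral integral {a..b} R) {a..b}"
    by (intro integrable_integral integrable_continuous_interval)
  ultimately have "((\<lambda>t. F' t + R t) has_integral
      (l * c b * (u b)\<^sup>2 - l * c a * (u a)\<^sup>2 + integral {a..b} R)) {a..b}"
    by (rule has_integral_add)
  moreover have "F' t + R t = (w t)\<^sup>2 - l\<^sup>2 * (u t)\<^sup>2" for t
    unfolding F'_def R_def by (simp add: algebra_simps power2_eq_square)
  moreover have "0 \<le> integral {a..b} R"
    using \<open>(R has_integral _) _\<close> by (intro integral_nonneg) (auto simp: R_def)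
  ultimately show ?thesis
    by (simp add: integral_unique c_def)
qed

lemma wirtinger_scaled:
  fixes u w :: "real \<Rightarrow> real"
  assumes u': "\<And>t. t \<in> {0..pi} \<Longrightarrow> (u has_real_derivative w t) (at t within {0..pi})"
    and cont_w: "continuous_on {0..pi} w"
    and antiperiodic: "u pi = - u 0"
    and zero: "t0 \<in> {0..pi}" "u t0 = 0"
    and l: "0 < l" "l < 1"
  shows "l\<^sup>2 * integral {0..pi} (\<lambda>t. (u t)\<^sup>2) \<le> integral {0..pi} (\<lambda>t. (w t)\<^sup>2)"
proof -
  define \<delta> where "\<delta> = (1 - l) * pi / 2"
  have \<delta>: "0 < \<delta>" "l * pi + \<delta> < pi"
    using l pi_gt_zero by (auto simp: \<delta>_def field_simps)
  define E where "E t = (w t)\<^sup>2 - l\<^sup>2 * (u t)\<^sup>2" for t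
  txt \<open>On \<open>[t0, pi]\<close> and then \<open>[0, t0]\<close> the phase runs through \<open>[\<delta>, l*pi + \<delta>] \<subseteq> (0, pi)\<close>,
    continued across \<open>pi \<equiv> 0\<close>: the boundary terms at \<open>t0\<close> vanish and those at \<open>0\<close> and \<open>pi\<close>
    cancel by antiperiodicity.\<close>
  have upper: "l * cot (l*pi + (\<delta> - l*t0)) * (u pi)\<^sup>2 - l * cot (l*t0 + (\<delta> - l*t0)) * (u t0)\<^sup>2
      \<le> integral {t0..pi} E"
    unfolding E_def
  proof (rule cot_weighted_energy_bound)
    fix t assume t: "t \<in> {t0..pi}"
    have "l * t0 \<le> l * t" "l * t \<le> l * pi" "0 \<le> l * t0" using t l zero by auto
    then show "0 < sin (l*t + (\<delta> - l*t0))" using \<delta> zero by (intro sin_gt_zero) auto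
    show "(u has_real_derivative w t) (at t within {t0..pi})"
      using u'[of t] t zero by (auto intro: DERIV_subset)
  qed (use zero cont_w in \<open>auto intro: continuous_on_subset\<close>)
  have lower: "l * cot (l*t0 + (l*(pi - t0) + \<delta>)) * (u t0)\<^sup>2 - l * cot (l*0 + (l*(pi - t0) + \<delta>)) * (u 0)\<^sup>2
      \<le> integral {0..t0} E"
    unfolding E_def
  proof (rule cot_weighted_energy_bound)
    fix t assume t: "t \<in> {0..t0}"
    have "0 \<le> l * t" "l * t \<le> l * t0" "l * t0 \<le> l * pi" using t l zero by auto
    then show "0 < sin (l*t + (l*(pi - t0) + \<delta>))" using \<delta> by (intro sin_gt_zero) (auto simp: algebra_simps)
    show "(u has_real_derivative w t) (at t within {0..t0})"
      using u'[of t] t zero by (auto intro: DERIV_subset)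
  qed (use zero cont_w in \<open>auto intro: continuous_on_subset\<close>)
  have cont_u: "continuous_on {0..pi} u"
    using u' by (meson DERIV_continuous continuous_on_eq_continuous_within)
  have int_u: "(\<lambda>t. (u t)\<^sup>2) integrable_on {0..pi}" and int_w: "(\<lambda>t. (w t)\<^sup>2) integrable_on {0..pi}"
    using cont_u cont_w by (auto intro!: integrable_continuous_interval continuous_intros)
  have phase: "l*pi + (\<delta> - l*t0) = l*(pi - t0) + \<delta>"
    by (simp add: algebra_simps)
  have "0 \<le> integral {0..t0} E + integral {t0..pi} E"
    using upper lower zero antiperiodic unfolding phase by simp
  also have "\<dots> = integral {0..pi} E"
    using zero int_u int_w unfolding E_def
    by (intro Henstock_Kurzweil_Integration.integral_combine integrable_diff integrable_on_mult_right) auto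
  also have "\<dots> = integral {0..pi} (\<lambda>t. (w t)\<^sup>2) - l\<^sup>2 * integral {0..pi} (\<lambda>t. (u t)\<^sup>2)"
    unfolding E_def using int_u int_w by (simp add: integral_diff integrable_on_mult_right)
  finally show ?thesis by simp
qed

lemma wirtinger_antiperiodic:
  fixes u w :: "real \<Rightarrow> real"
  assumes u': "\<And>t. t \<in> {0..pi} \<Longrightarrow> (u has_real_derivative w t) (at t within {0..pi})"
    and cont_w: "continuous_on {0..pi} w"
    and antiperiodic: "u pi = - u 0"
  shows "integral {0..pi} (\<lambda>t. (u t)\<^sup>2) \<le> integral {0..pi} (\<lambda>t. (w t)\<^sup>2)"
proof (rule field_le_mult_one_interval)
  have cont_u: "continuous_on {0..pi} u"
    using u' by (meson DERIV_continuous continuous_on_eq_continuous_within)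
  obtain t0 where t0: "t0 \<in> {0..pi}" "u t0 = 0"
  proof (cases "u 0 \<le> 0")
    case True
    then show ?thesis using IVT'[of u 0 0 pi] cont_u antiperiodic that by auto
  next
    case False
    then show ?thesis using IVT2'[of u pi 0 0] cont_u antiperiodic that by auto
  qed
  fix z :: real assume z: "0 < z" "z < 1"
  then have "(sqrt z)\<^sup>2 * integral {0..pi} (\<lambda>t. (u t)\<^sup>2) \<le> integral {0..pi} (\<lambda>t. (w t)\<^sup>2)"
    by (intro wirtinger_scaled[OF u' cont_w antiperiodic t0]) (auto simp: real_sqrt_less_iff[of z 1, simplified])
  then show "z * integral {0..pi} (\<lambda>t. (u t)\<^sup>2) \<le> integral {0..pi} (\<lambda>t. (w t)\<^sup>2)"
    using z by simp
qed

definition centred_tail :: "(real \<Rightarrow> complex) \<Rightarrow> real \<Rightarrow> complex" where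
  "centred_tail g s = integral {s..pi} g - integral {0..pi} g / 2"

lemma centred_tail_antiperiodic: "centred_tail g pi = - centred_tail g 0"
  by (simp add: centred_tail_def)

lemma continuous_on_centred_tail:
  "g integrable_on {0..pi} \<Longrightarrow> continuous_on {0..pi} (centred_tail g)"
  unfolding centred_tail_def by (intro continuous_intros indefinite_integral_continuous_1')

lemma centred_tail_has_vector_derivative:
  assumes "continuous_on {0..pi} g" "s \<in> {0..pi}"
  shows "(centred_tail g has_vector_derivative - g s) (at s within {0..pi})"
  unfolding centred_tail_def
  using integral_has_vector_derivative'[OF assms] by (auto intro!: derivative_eq_intros)

lemma norm_centred_tail_le:
  assumes g: "g integrable_on {0..pi}" "\<And>s. s \<in> {0..pi} \<Longrightarrow> cmod (g s) \<le> 1"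
    and s: "s \<in> {0..pi}"
  shows "cmod (centred_tail g s) \<le> 3 / 2 * pi"
proof -
  have tail_le: "cmod (integral {t..pi} g) \<le> pi" if "t \<in> {0..pi}" for t
  proof -
    have "cmod (integral {t..pi} g) \<le> integral {t..pi} (\<lambda>_. 1::real)"
      using g that by (intro integral_norm_bound_integral integrable_on_subinterval[OF g(1)]) auto
    then show ?thesis using that by simp
  qed
  have "cmod (centred_tail g s) \<le> cmod (integral {s..pi} g) + cmod (integral {0..pi} g / 2)"
    unfolding centred_tail_def by (rule norm_triangle_ineq4)
  then show ?thesis
    using tail_le[OF s] tail_le[of 0] by (simp add: norm_divide)
qed

lemma wirtinger_centred_tail_continuous:
  assumes cont_g: "continuous_on {0..pi} g"
  shows "integral {0..pi} (\<lambda>s. (cmod (centred_tail g s))\<^sup>2) \<le> integral {0..pi} (\<lambda>s. (cmod (g s))\<^sup>2)"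
proof -
  note tail' = centred_tail_has_vector_derivative[OF cont_g]
  have "integral {0..pi} (\<lambda>s. (Re (centred_tail g s))\<^sup>2) \<le> integral {0..pi} (\<lambda>s. (- Re (g s))\<^sup>2)"
    using tail' cont_g centred_tail_antiperiodic[of g]
    by (intro wirtinger_antiperiodic) (auto intro!: derivative_eq_intros continuous_intros)
  moreover have "integral {0..pi} (\<lambda>s. (Im (centred_tail g s))\<^sup>2) \<le> integral {0..pi} (\<lambda>s. (- Im (g s))\<^sup>2)"
    using tail' cont_g centred_tail_antiperiodic[of g]
    by (intro wirtinger_antiperiodic) (auto intro!: derivative_eq_intros continuous_intros)
  moreover have "continuous_on {0..pi} (centred_tail g)"
    using cont_g by (intro continuous_on_centred_tail integrable_continuous_interval)
  then have "(\<lambda>s. (Re (centred_tail g s))\<^sup>2) integrable_on {0..pi}"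
    "(\<lambda>s. (Im (centred_tail g s))\<^sup>2) integrable_on {0..pi}"
    "(\<lambda>s. (Re (g s))\<^sup>2) integrable_on {0..pi}" "(\<lambda>s. (Im (g s))\<^sup>2) integrable_on {0..pi}"
    using cont_g by (auto intro!: integrable_continuous_interval continuous_intros)
  ultimately show ?thesis
    by (simp add: cmod_power2 integral_add)
qed

lemma continuous_unit_disc_approximation:
  fixes g :: "real \<Rightarrow> complex"
  assumes S: "S \<in> sets lebesgue" and g: "g \<in> borel_measurable (lebesgue_on S)"
    and bounded: "\<And>s. s \<in> S \<Longrightarrow> cmod (g s) \<le> 1"
  obtains N h where "negligible N" "\<And>n. continuous_on UNIV (h n)" "\<And>n x. cmod (h n x) \<le> 1"
    "\<And>x. x \<in> S - N \<Longrightarrow> (\<lambda>n. h n x) \<longlonglongrightarrow> g x"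
proof -
  obtain N f where N: "negligible N" and cont_f: "\<And>n. continuous_on UNIV (f n)"
    and lim_f: "\<And>x. x \<notin> N \<Longrightarrow> (\<lambda>n. f n x) \<longlonglongrightarrow> (if x \<in> S then g x else 0)"
    using g S unfolding measurable_on_iff_borel_measurable[OF S, symmetric] measurable_on_def by blast
  define r :: "complex \<Rightarrow> complex" where "r z = z / of_real (max 1 (cmod z))" for z
  have cont_r: "continuous_on UNIV r"
    unfolding r_def by (intro continuous_intros) (auto simp: max_def)
  show ?thesis
  proof
    show "continuous_on UNIV (r \<circ> f n)" for n
      unfolding o_def by (rule continuous_on_compose2[OF cont_r cont_f]) auto
    show "cmod ((r \<circ> f n) x) \<le> 1" for n x
      by (simp add: r_def norm_divide max_def)
    fix x assume x: "x \<in> S - N"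
    have "(\<lambda>n. r (f n x)) \<longlonglongrightarrow> r (g x)"
      using lim_f[of x] x by (auto intro: continuous_on_tendsto_compose[OF cont_r])
    moreover have "r (g x) = g x"
      using bounded[of x] x by (simp add: r_def max_def)
    ultimately show "(\<lambda>n. (r \<circ> f n) x) \<longlonglongrightarrow> g x" by simp
  qed (fact N)
qed

lemma wirtinger_centred_tail:
  assumes g: "g absolutely_integrable_on {0..pi}" and bounded: "\<And>s. s \<in> {0..pi} \<Longrightarrow> cmod (g s) \<le> 1"
  shows "integral {0..pi} (\<lambda>s. (cmod (centred_tail g s))\<^sup>2) \<le> integral {0..pi} (\<lambda>s. (cmod (g s))\<^sup>2)"
proof -
  obtain N h where N: "negligible N" and cont_h: "\<And>n. continuous_on UNIV (h n)"
    and h_le: "\<And>n x. cmod (h n x) \<le> 1" and lim_h: "\<And>x. x \<in> {0..pi} - N \<Longrightarrow> (\<lambda>n. h n x) \<longlonglongrightarrow> g x"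
    using continuous_unit_disc_approximation[of "{0..pi}" g] g bounded
    by (auto simp: absolutely_integrable_measurable)
  have cont_h': "continuous_on {a..b} (h n)" for a b n
    using cont_h by (rule continuous_on_subset) auto
  have lim_tail: "(\<lambda>n. integral {s..pi} (h n)) \<longlonglongrightarrow> integral {s..pi} g" if "s \<in> {0..pi}" for s
    using that h_le lim_h
    by (intro dominated_convergence_off_negligible[where h="\<lambda>_. 1", OF _ _ _ N]
        integrable_continuous_interval cont_h' continuous_intros) auto
  have lim_centred: "(\<lambda>n. centred_tail (h n) s) \<longlonglongrightarrow> centred_tail g s" if "s \<in> {0..pi}" for s
    unfolding centred_tail_def using lim_tail[OF that] lim_tail[of 0] by (intro tendsto_intros) auto
  have "(\<lambda>n. integral {0..pi} (\<lambda>s. (cmod (centred_tail (h n) s))\<^sup>2))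
      \<longlonglongrightarrow> integral {0..pi} (\<lambda>s. (cmod (centred_tail g s))\<^sup>2)"
  proof (rule dominated_convergence(2)[where h="\<lambda>_. (3 / 2 * pi)\<^sup>2"])
    show "(\<lambda>s. (cmod (centred_tail (h n) s))\<^sup>2) integrable_on {0..pi}" for n
      by (intro integrable_continuous_interval continuous_intros continuous_on_centred_tail
          integrable_continuous_interval cont_h')
    show "norm ((cmod (centred_tail (h n) s))\<^sup>2) \<le> (3 / 2 * pi)\<^sup>2" if "s \<in> {0..pi}" for n s
      using norm_centred_tail_le[OF integrable_continuous_interval[OF cont_h'] h_le that]
      by (simp add: power_mono)
    show "(\<lambda>n. (cmod (centred_tail (h n) s))\<^sup>2) \<longlonglongrightarrow> (cmod (centred_tail g s))\<^sup>2"
      if "s \<in> {0..pi}" for s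
      using lim_centred[OF that] by (intro tendsto_intros)
  qed auto
  moreover have "(\<lambda>n. integral {0..pi} (\<lambda>s. (cmod (h n s))\<^sup>2)) \<longlonglongrightarrow> integral {0..pi} (\<lambda>s. (cmod (g s))\<^sup>2)"
    using h_le lim_h
    by (intro dominated_convergence_off_negligible[where h="\<lambda>_. 1", OF _ _ _ N] tendsto_intros
        integrable_continuous_interval continuous_intros cont_h') (auto simp: power_le_one)
  ultimately show ?thesis
    by (rule LIMSEQ_le) (auto intro: wirtinger_centred_tail_continuous cont_h')
qed

section \<open>The unweighted functional\<close>

lemma cross2_add_right: "cross2 z (v + w) = cross2 z v + cross2 z w"
  by (simp add: cross2_def algebra_simps)

lemma cross2_scaleR_right: "cross2 z (r *\<^sub>R w) = r * cross2 z w"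
  by (simp add: cross2_def algebra_simps scaleR_conv_of_real)

lemma cross2_eq_Im_cnj_mult: "cross2 z w = Im (cnj z * w)"
  by (simp add: cross2_def algebra_simps)

lemma abs_cross2_le: "\<bar>cross2 z w\<bar> \<le> cmod z * cmod w"
  using abs_Im_le_cmod[of "cnj z * w"] by (simp add: cross2_eq_Im_cnj_mult norm_mult)

lemma cross2_eq_norm_rotation: "cross2 z w = ((cmod z)\<^sup>2 + (cmod w)\<^sup>2) / 2 - (cmod (w - \<i> * z))\<^sup>2 / 2"
  by (simp only: cmod_power2) (simp add: cross2_def power2_eq_square field_simps)

lemma cross2_rotation: "cross2 (\<i> * z) (- (of_real r * z)) = r * (cmod z)\<^sup>2"
  unfolding cmod_power2 by (simp add: cross2_def algebra_simps power2_eq_square)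

lemma bounded_linear_cross2_left: "bounded_linear (\<lambda>z. cross2 z w)"
  unfolding cross2_def
  by (intro bounded_linear_sub bounded_linear_compose[OF bounded_linear_mult_left]
      bounded_linear_Re bounded_linear_Im)

lemma bounded_linear_cross2_right: "bounded_linear (\<lambda>w. cross2 z w)"
  unfolding cross2_def
  by (intro bounded_linear_sub bounded_linear_compose[OF bounded_linear_mult_right]
      bounded_linear_Re bounded_linear_Im)

lemma set_integral_cross2_scaleR:
  fixes d :: "real \<Rightarrow> complex"
  assumes "(\<lambda>b. p b *\<^sub>R d b) absolutely_integrable_on S"
  shows "(\<integral>b\<in>S. k * p b * cross2 z (d b) \<partial>lebesgue) = k * cross2 z (integral S (\<lambda>b. p b *\<^sub>R d b))"
proof -
  have linear: "bounded_linear (\<lambda>w. k * cross2 z w)"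
    by (rule bounded_linear_compose[OF bounded_linear_mult_right bounded_linear_cross2_right])
  have "(\<integral>b\<in>S. k * p b * cross2 z (d b) \<partial>lebesgue) = (\<integral>b\<in>S. k * cross2 z (p b *\<^sub>R d b) \<partial>lebesgue)"
    by (simp add: cross2_scaleR_right mult.assoc)
  also have "\<dots> = integral S (\<lambda>b. k * cross2 z (p b *\<^sub>R d b))"
    using absolutely_integrable_linear[OF assms linear]
    by (intro set_lebesgue_integral_eq_integral(2)) (simp add: o_def)
  also have "\<dots> = k * cross2 z (integral S (\<lambda>b. p b *\<^sub>R d b))"
    using integral_linear[OF set_lebesgue_integral_eq_integral(1)[OF assms] linear] by (simp add: o_def)
  finally show ?thesis .
qed

definition tail_cross_integral :: "(real \<Rightarrow> complex) \<Rightarrow> real" where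
  "tail_cross_integral g = integral {0..pi} (\<lambda>s. cross2 (g s) (integral {s..pi} g))"

context
  fixes g :: "real \<Rightarrow> complex"
  assumes g_int: "g absolutely_integrable_on {0..pi}"
    and g_le_1: "\<And>s. s \<in> {0..pi} \<Longrightarrow> cmod (g s) \<le> 1"
begin

lemma tail_cross_integrands_absolutely_integrable:
  shows "(\<lambda>s. (cmod (g s))\<^sup>2) absolutely_integrable_on {0..pi}"
    and "(\<lambda>s. (cmod (centred_tail g s))\<^sup>2) absolutely_integrable_on {0..pi}"
    and "(\<lambda>s. (cmod (centred_tail g s - \<i> * g s))\<^sup>2) absolutely_integrable_on {0..pi}"
proof -
  have [measurable]: "g \<in> borel_measurable (lebesgue_on {0..pi})"
    using g_int by (simp add: absolutely_integrable_measurable)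
  have g_integrable: "g integrable_on {0..pi}"
    using g_int by (rule set_lebesgue_integral_eq_integral(1))
  have [measurable]: "centred_tail g \<in> borel_measurable (lebesgue_on {0..pi})"
    using continuous_on_centred_tail[OF g_integrable]
    by (intro continuous_imp_measurable_on_sets_lebesgue) auto
  have tail_le: "cmod (centred_tail g s) \<le> 3 / 2 * pi" if "s \<in> {0..pi}" for s
    using norm_centred_tail_le[OF g_integrable g_le_1 that] .
  show "(\<lambda>s. (cmod (g s))\<^sup>2) absolutely_integrable_on {0..pi}"
    by (rule absolutely_integrable_on_bounded_measurable[where B=1])
      (auto simp: g_le_1 power_le_one)
  show "(\<lambda>s. (cmod (centred_tail g s))\<^sup>2) absolutely_integrable_on {0..pi}"
    by (rule absolutely_integrable_on_bounded_measurable[where B="(3 / 2 * pi)\<^sup>2"])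
      (use power_mono[OF tail_le, of _ 2] in auto)
  have "cmod (centred_tail g s - \<i> * g s) \<le> 3 / 2 * pi + 1" if "s \<in> {0..pi}" for s
    using norm_triangle_ineq4[of "centred_tail g s" "\<i> * g s"] tail_le[OF that] g_le_1[OF that]
    by (simp add: norm_mult)
  then show "(\<lambda>s. (cmod (centred_tail g s - \<i> * g s))\<^sup>2) absolutely_integrable_on {0..pi}"
    by (intro absolutely_integrable_on_bounded_measurable[where B="(3 / 2 * pi + 1)\<^sup>2"])
      (auto intro: power_mono)
qed

lemma tail_cross_integrand_absolutely_integrable:
  "(\<lambda>s. cross2 (g s) (integral {s..pi} g)) absolutely_integrable_on {0..pi}"
proof (rule absolutely_integrable_on_bounded_measurable[where B=pi])
  have g_integrable: "g integrable_on {0..pi}"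
    using g_int by (rule set_lebesgue_integral_eq_integral(1))
  have [measurable]: "g \<in> borel_measurable (lebesgue_on {0..pi})"
    using g_int by (simp add: absolutely_integrable_measurable)
  have [measurable]: "(\<lambda>s. integral {s..pi} g) \<in> borel_measurable (lebesgue_on {0..pi})"
    using indefinite_integral_continuous_1'[OF g_integrable]
    by (intro continuous_imp_measurable_on_sets_lebesgue) auto
  show "(\<lambda>s. cross2 (g s) (integral {s..pi} g)) \<in> borel_measurable (lebesgue_on {0..pi})"
    unfolding cross2_def by measurable
  fix s assume s: "s \<in> {0..pi}"
  have "cmod (integral {s..pi} g) \<le> integral {s..pi} (\<lambda>_. 1::real)"
    using s g_le_1 by (intro integral_norm_bound_integral integrable_on_subinterval[OF g_integrable]) auto
  then have "cmod (integral {s..pi} g) \<le> pi"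
    using s by simp
  then show "norm (cross2 (g s) (integral {s..pi} g)) \<le> pi"
    using abs_cross2_le[of "g s" "integral {s..pi} g"] g_le_1[OF s] mult_mono[of "cmod (g s)" 1]
    by fastforce
qed

lemma tail_cross_integral_eq_norms:
  "tail_cross_integral g = (integral {0..pi} (\<lambda>s. (cmod (g s))\<^sup>2)
      + integral {0..pi} (\<lambda>s. (cmod (centred_tail g s))\<^sup>2)) / 2
    - integral {0..pi} (\<lambda>s. (cmod (centred_tail g s - \<i> * g s))\<^sup>2) / 2"
proof -
  define V where "V = integral {0..pi} g"
  have g_integrable: "g integrable_on {0..pi}"
    using g_int by (rule set_lebesgue_integral_eq_integral(1))
  note integrable = tail_cross_integrands_absolutely_integrable[THEN set_lebesgue_integral_eq_integral(1)]
  have mean_term: "integral {0..pi} (\<lambda>s. cross2 (g s) (V / 2)) = 0"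
    using integral_linear[OF g_integrable bounded_linear_cross2_left, of "V / 2"]
    by (simp add: o_def V_def cross2_def)
  have mean_integrable: "(\<lambda>s. cross2 (g s) (V / 2)) integrable_on {0..pi}"
    using integrable_linear[OF g_integrable bounded_linear_cross2_left] by (simp add: o_def)
  have "cross2 (g s) (integral {s..pi} g) = ((cmod (g s))\<^sup>2 + (cmod (centred_tail g s))\<^sup>2) / 2
      - (cmod (centred_tail g s - \<i> * g s))\<^sup>2 / 2 + cross2 (g s) (V / 2)" for s
  proof -
    have "integral {s..pi} g = centred_tail g s + V / 2"
      by (simp add: centred_tail_def V_def)
    then show ?thesis
      by (simp add: cross2_add_right cross2_eq_norm_rotation[of "g s" "centred_tail g s"])
  qed
  then show ?thesis
    unfolding tail_cross_integral_def using integrable mean_term mean_integrable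
    by (simp add: integral_add integral_diff integrable_add integrable_diff integrable_on_divide)
qed

lemma integral_norm_sq_le_pi: "integral {0..pi} (\<lambda>s. (cmod (g s))\<^sup>2) \<le> pi"
proof -
  have "integral {0..pi} (\<lambda>s. (cmod (g s))\<^sup>2) \<le> integral {0..pi} (\<lambda>_. 1)"
    using tail_cross_integrands_absolutely_integrable(1) g_le_1
    by (intro integral_le set_lebesgue_integral_eq_integral(1)) (auto simp: power_le_one)
  then show ?thesis
    by simp
qed

lemma integral_rotation_defect_nonneg:
  "0 \<le> integral {0..pi} (\<lambda>s. (cmod (centred_tail g s - \<i> * g s))\<^sup>2)"
  using tail_cross_integrands_absolutely_integrable(3)[THEN set_lebesgue_integral_eq_integral(1)]
  by (rule integral_nonneg) simp

lemma integral_norm_sq_centred_tail_le: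
  "integral {0..pi} (\<lambda>s. (cmod (centred_tail g s))\<^sup>2) \<le> integral {0..pi} (\<lambda>s. (cmod (g s))\<^sup>2)"
  by (rule wirtinger_centred_tail[OF g_int]) (rule g_le_1)

lemma tail_cross_integral_le_pi: "tail_cross_integral g \<le> pi"
  using integral_norm_sq_le_pi integral_rotation_defect_nonneg integral_norm_sq_centred_tail_le
  unfolding tail_cross_integral_eq_norms by argo

lemma centred_tail_exp_of_rotation:
  assumes N: "negligible N" and g_eq: "\<And>s. s \<in> {0..pi} - N \<Longrightarrow> g s = - \<i> * centred_tail g s"
    and s: "s \<in> {0..pi}"
  shows "centred_tail g s = exp (\<i> * of_real s) * centred_tail g 0"
proof -
  define H where "H = centred_tail g"
  have cont_H: "continuous_on {0..pi} H"
    unfolding H_def using g_int by (intro continuous_on_centred_tail set_lebesgue_integral_eq_integral(1))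
  txt \<open>Integrating \<open>g = -\<i> * H\<close>, \<open>H\<close> solves \<open>H' = \<i> * H\<close> everywhere on \<open>[0, pi]\<close>.\<close>
  have H_eq: "H t = integral {t..pi} (\<lambda>t. - \<i> * H t) - integral {0..pi} g / 2" if "t \<in> {0..pi}" for t
  proof -
    have "integral {t..pi} g = integral {t..pi} (\<lambda>t. - \<i> * H t)"
      using that g_eq by (intro integral_spike[OF N]) (auto simp: H_def)
    then show ?thesis
      by (simp add: H_def centred_tail_def)
  qed
  have "(H has_vector_derivative \<i> * H t) (at t within {0..pi})" if "t \<in> {0..pi}" for t
  proof (rule has_vector_derivative_transform[OF that H_eq])
    have "continuous_on {0..pi} (\<lambda>t. - \<i> * H t)"
      using cont_H by (intro continuous_intros)
    from has_vector_derivative_diff[OF integral_has_vector_derivative'[OF this that]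
        has_vector_derivative_const[of "integral {0..pi} g / 2"]]
    show "((\<lambda>t. integral {t..pi} (\<lambda>t. - \<i> * H t) - integral {0..pi} g / 2)
        has_vector_derivative \<i> * H t) (at t within {0..pi})"
      by simp
  qed
  then show ?thesis
    using has_vector_derivative_linear_imp_exp[OF _ s] by (simp add: H_def)
qed

lemma tail_cross_integral_eq_pi_imp_rotation:
  assumes "tail_cross_integral g = pi"
  obtains c N where "negligible N" "\<And>s. s \<in> {0..pi} - N \<Longrightarrow> g s = exp (\<i> * of_real (s + c))"
proof -
  define H where "H = centred_tail g"
  have "integral {0..pi} (\<lambda>s. (cmod (H s - \<i> * g s))\<^sup>2) = 0"
    and norm_sq: "integral {0..pi} (\<lambda>s. (cmod (g s))\<^sup>2) = pi"
    using assms integral_norm_sq_le_pi integral_rotation_defect_nonneg integral_norm_sq_centred_tail_le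
    unfolding tail_cross_integral_eq_norms H_def by argo+
  then have "negligible {s \<in> {0..pi}. (cmod (H s - \<i> * g s))\<^sup>2 \<noteq> 0}"
    using tail_cross_integrands_absolutely_integrable(3)
    by (intro negligible_nonzero_of_integral_eq_0) (auto simp: H_def intro: AE_I2)
  then obtain N where N: "negligible N" and g_eq: "\<And>s. s \<in> {0..pi} - N \<Longrightarrow> g s = - \<i> * H s"
    by (auto intro: that[of "{s \<in> {0..pi}. (cmod (H s - \<i> * g s))\<^sup>2 \<noteq> 0}"])
  have g_rot: "g s = exp (\<i> * of_real s) * (- \<i> * H 0)" if "s \<in> {0..pi} - N" for s
    using g_eq[OF that] centred_tail_exp_of_rotation[OF N g_eq[unfolded H_def], of s] that
    by (simp add: H_def)
  have "integral {0..pi} (\<lambda>_. (cmod (- \<i> * H 0))\<^sup>2) = integral {0..pi} (\<lambda>s. (cmod (g s))\<^sup>2)"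
    by (rule integral_spike[OF N]) (simp add: g_rot norm_mult)
  then have "(cmod (- \<i> * H 0))\<^sup>2 = 1"
    using norm_sq by simp
  then have unit: "cmod (- \<i> * H 0) = 1"
    by (smt (verit) norm_ge_zero power2_eq_1_iff)
  define c where "c = Arg (- \<i> * H 0)"
  from unit have "- \<i> * H 0 \<noteq> 0"
    by auto
  then have "exp (\<i> * of_real c) = sgn (- \<i> * H 0)"
    unfolding c_def by (simp add: cis_Arg flip: cis_conv_exp)
  also have "\<dots> = - \<i> * H 0"
    using unit by (simp add: sgn_div_norm)
  finally have "exp (\<i> * of_real c) = - \<i> * H 0" .
  then have "g s = exp (\<i> * of_real (s + c))" if "s \<in> {0..pi} - N" for s
    using g_rot[OF that] by (simp add: distrib_left exp_add)
  with N show ?thesis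
    by (rule that)
qed

end

lemma tail_cross_integral_exp_i: "tail_cross_integral (\<lambda>s. exp (\<i> * of_real s)) = pi"
proof -
  have "cross2 (exp (\<i> * of_real s)) (integral {s..pi} (\<lambda>t. exp (\<i> * of_real t))) = 1 + cos s"
    if "s \<in> {0..pi}" for s
    using that
    by (simp add: integral_exp_i cross2_def Re_exp Im_exp algebra_simps flip: power2_eq_square)
  then have "tail_cross_integral (\<lambda>s. exp (\<i> * of_real s)) = integral {0..pi} (\<lambda>s. 1 + cos s)"
    unfolding tail_cross_integral_def by (intro integral_cong) auto
  also have "\<dots> = pi"
  proof -
    have "((\<lambda>s. 1 + cos s) has_integral ((pi + sin pi) - (0 + sin 0))) {0..pi}"
      by (intro fundamental_theorem_of_calculus)
        (auto intro!: derivative_eq_intros simp flip: has_real_derivative_iff_has_vector_derivative)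
    then show ?thesis
      by (simp add: integral_unique)
  qed
  finally show ?thesis .
qed

section \<open>Substitution by the normalized primitive\<close>

locale normalized_primitive =
  fixes p \<nu> :: "real \<Rightarrow> real" and m :: real
  assumes p_integrable: "\<And>a b. p absolutely_integrable_on {a..b}"
    and p_periodic: "\<And>x. p (x + pi) = p x"
    and p_pos: "AE x in lebesgue. 0 < p x"
    and \<nu>_bilipschitz: "\<exists>L>0. \<forall>x y. \<bar>x - y\<bar> \<le> L * \<bar>\<nu> x - \<nu> y\<bar> \<and> \<bar>\<nu> x - \<nu> y\<bar> \<le> L * \<bar>x - y\<bar>"
    and \<nu>_0: "\<nu> 0 = 0"
    and m_eq: "m = 1 / (2*pi) * integral {0..2*pi} p"
    and \<nu>_deriv: "AE x in lebesgue. (\<nu> has_real_derivative p x / m) (at x)"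
begin

definition q :: "real \<Rightarrow> real" where
  "q x = p x / m"

lemma m_pos: "0 < m"
  using integral_pos_of_AE_pos[OF p_integrable _ p_pos, of 0 "2*pi"] by (simp add: m_eq)

lemma q_integrable: "q absolutely_integrable_on {a..b}"
  using absolutely_integrable_scaleR_left[OF p_integrable[of a b], of "1 / m"]
  by (simp add: q_def[abs_def] divide_inverse mult.commute)

definition regular_points :: "real set" where
  "regular_points = {x. 0 < q x \<and> (\<nu> has_real_derivative q x) (at x)}"

lemma negligible_irregular_points: "negligible (- regular_points)"
proof -
  have "AE x in lebesgue. x \<in> regular_points"
    using p_pos \<nu>_deriv by eventually_elim (simp add: regular_points_def q_def m_pos)
  then obtain N where N: "negligible N" and sub: "{x. x \<notin> regular_points} \<subseteq> N"
    unfolding eventually_ae_filter_negligible by blast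
  show ?thesis
    by (rule negligible_subset[OF N]) (use sub in auto)
qed

lemma regular_points_sets: "regular_points \<in> sets lebesgue"
  using negligible_imp_sets[OF negligible_irregular_points] sets.compl_sets[of "- regular_points" lebesgue]
  by simp

lemma regular_points_nonempty: "regular_points \<noteq> {}"
proof
  assume "regular_points = {}"
  then have "negligible {0..1::real}"
    using negligible_irregular_points by simp
  then show False
    using not_negligible_interval[of 0 1] by simp
qed

lemma continuous_on_\<nu>: "continuous_on A \<nu>"
proof -
  obtain L where "0 < L" "\<forall>x y. \<bar>\<nu> x - \<nu> y\<bar> \<le> L * \<bar>x - y\<bar>"
    using \<nu>_bilipschitz by blast
  then have "L-lipschitz_on A \<nu>"
    by (intro lipschitz_onI) (auto simp: dist_real_def)
  then show ?thesis
    by (rule lipschitz_on_continuous_on)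
qed

lemma inj_\<nu>: "inj \<nu>"
proof (rule injI)
  fix x y assume "\<nu> x = \<nu> y"
  moreover obtain L where "\<forall>x y. \<bar>x - y\<bar> \<le> L * \<bar>\<nu> x - \<nu> y\<bar>"
    using \<nu>_bilipschitz by blast
  then have "\<bar>x - y\<bar> \<le> L * \<bar>\<nu> x - \<nu> y\<bar>"
    by blast
  ultimately show "x = y"
    by simp
qed

text \<open>An injective continuous function is strictly monotone; the sign of \<open>\<nu>'\<close> at a single regular
  point decides the direction.\<close>
lemma \<nu>_less_iff [simp]: "\<nu> x < \<nu> y \<longleftrightarrow> x < y"
proof -
  have mono_or_antimono: "strict_mono_on UNIV \<nu> \<or> strict_antimono_on UNIV \<nu>"
    using injective_eq_monotone_map[of UNIV \<nu>] inj_\<nu> continuous_on_\<nu> by simp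
  obtain x0 where "0 < q x0" "(\<nu> has_real_derivative q x0) (at x0)"
    using regular_points_nonempty unfolding regular_points_def by blast
  then have "\<exists>d>0. \<forall>h>0. h < d \<longrightarrow> \<nu> x0 < \<nu> (x0 + h)"
    by (intro DERIV_pos_inc_right)
  then obtain d where "0 < d" and inc: "\<forall>h>0. h < d \<longrightarrow> \<nu> x0 < \<nu> (x0 + h)"
    by blast
  have "\<not> strict_antimono_on UNIV \<nu>"
  proof
    assume "strict_antimono_on UNIV \<nu>"
    then have "\<nu> (x0 + d / 2) < \<nu> x0"
      using monotone_onD[of UNIV "(<)" "\<lambda>x y. y < x" \<nu> x0 "x0 + d / 2"] \<open>0 < d\<close> by simp
    moreover have "\<nu> x0 < \<nu> (x0 + d / 2)"
      using inc \<open>0 < d\<close> by simp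
    ultimately show False
      by simp
  qed
  with mono_or_antimono have "strict_mono_on UNIV \<nu>"
    by blast
  then show ?thesis
    by (rule strict_mono_on_less) auto
qed

lemma \<nu>_le_iff [simp]: "\<nu> x \<le> \<nu> y \<longleftrightarrow> x \<le> y"
  by (meson \<nu>_less_iff not_less)

lemma \<nu>_image_interval: "\<nu> ` {a..b} = {\<nu> a..\<nu> b}"
proof
  show "{\<nu> a..\<nu> b} \<subseteq> \<nu> ` {a..b}"
  proof
    fix y assume y: "y \<in> {\<nu> a..\<nu> b}"
    then have "a \<le> b"
      using order_trans[of "\<nu> a" y "\<nu> b"] by simp
    then obtain x where "a \<le> x" "x \<le> b" "\<nu> x = y"
      using IVT'[of \<nu> a y b] y continuous_on_\<nu> by auto
    then show "y \<in> \<nu> ` {a..b}"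
      by auto
  qed
qed auto

lemma negligible_\<nu>_image:
  assumes "negligible N"
  shows "negligible (\<nu> ` N)"
proof -
  obtain L where "\<forall>x y. \<bar>\<nu> x - \<nu> y\<bar> \<le> L * \<bar>x - y\<bar>"
    using \<nu>_bilipschitz by blast
  with assms show ?thesis
    by (intro negligible_Lipschitz_image[where L=L]) auto
qed

lemma negligible_\<nu>_vimage:
  assumes "negligible N"
  shows "negligible (\<nu> -` N)"
proof -
  obtain L where L: "\<forall>x y. \<bar>x - y\<bar> \<le> L * \<bar>\<nu> x - \<nu> y\<bar>"
    using \<nu>_bilipschitz by blast
  have "negligible (N \<inter> range \<nu>)"
    using assms by (rule negligible_subset) auto
  then have "negligible (inv \<nu> ` (N \<inter> range \<nu>))"
  proof (rule negligible_Lipschitz_image[where L=L])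
    fix y z assume "y \<in> N \<inter> range \<nu>" "z \<in> N \<inter> range \<nu>"
    then obtain x w where "y = \<nu> x" "z = \<nu> w"
      by blast
    then show "\<bar>inv \<nu> y - inv \<nu> z\<bar> \<le> L * \<bar>y - z\<bar>"
      using L by (simp add: inv_f_f[OF inj_\<nu>])
  qed
  moreover have "\<nu> -` N \<subseteq> inv \<nu> ` (N \<inter> range \<nu>)"
  proof
    fix x assume "x \<in> \<nu> -` N"
    then show "x \<in> inv \<nu> ` (N \<inter> range \<nu>)"
      by (intro image_eqI[of _ _ "\<nu> x"]) (auto simp: inv_f_f[OF inj_\<nu>])
  qed
  ultimately show ?thesis
    using negligible_subset by blast
qed

lemma
  fixes F :: "real \<Rightarrow> 'a::euclidean_space"
  shows absolutely_integrable_substitution_\<nu>: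
      "F absolutely_integrable_on {\<nu> a..\<nu> b} \<longleftrightarrow> (\<lambda>x. q x *\<^sub>R F (\<nu> x)) absolutely_integrable_on {a..b}"
    and integral_substitution_\<nu>: "F absolutely_integrable_on {\<nu> a..\<nu> b} \<Longrightarrow>
      integral {a..b} (\<lambda>x. q x *\<^sub>R F (\<nu> x)) = integral {\<nu> a..\<nu> b} F"
proof -
  define S where "S = {a..b} \<inter> regular_points"
  have S: "S \<in> sets lebesgue"
    unfolding S_def using regular_points_sets by auto
  have deriv: "(\<nu> has_field_derivative q x) (at x within S)" if "x \<in> S" for x
    using that by (auto simp: S_def regular_points_def intro: has_field_derivative_at_within)
  have inj: "inj_on \<nu> S"
    using inj_\<nu> by (rule inj_on_subset) simp
  have abs_q: "\<bar>q x\<bar> = q x" if "x \<in> S" for x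
    using that by (auto simp: S_def regular_points_def)
  have negligible_domain: "negligible ({a..b} - S)"
    using negligible_irregular_points by (rule negligible_subset) (auto simp: S_def)
  have "{\<nu> a..\<nu> b} - \<nu> ` S \<subseteq> \<nu> ` (- regular_points)"
    unfolding \<nu>_image_interval[symmetric] S_def by auto
  then have negligible_range: "negligible ({\<nu> a..\<nu> b} - \<nu> ` S)"
    using negligible_\<nu>_image[OF negligible_irregular_points] by (rule negligible_subset[rotated])
  note domain = negligible_spike_set_left[of S "{a..b}"] negligible_spike_set_right[of S "{a..b}"]
  note range = negligible_spike_set_left[of "\<nu> ` S" "{\<nu> a..\<nu> b}"]
    negligible_spike_set_right[of "\<nu> ` S" "{\<nu> a..\<nu> b}"]
  have S_sub: "S \<subseteq> {a..b}" "\<nu> ` S \<subseteq> {\<nu> a..\<nu> b}"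
    unfolding \<nu>_image_interval[symmetric] S_def by auto
  have "F absolutely_integrable_on \<nu> ` S \<longleftrightarrow> (\<lambda>x. \<bar>q x\<bar> *\<^sub>R F (\<nu> x)) absolutely_integrable_on S"
    by (rule absolutely_integrable_change_of_variables_real[OF S deriv inj])
  also have "\<dots> \<longleftrightarrow> (\<lambda>x. q x *\<^sub>R F (\<nu> x)) absolutely_integrable_on S"
    by (rule absolutely_integrable_spike_eq[of "{}"]) (auto simp: abs_q)
  finally show ai: "F absolutely_integrable_on {\<nu> a..\<nu> b} \<longleftrightarrow>
      (\<lambda>x. q x *\<^sub>R F (\<nu> x)) absolutely_integrable_on {a..b}"
    using S_sub negligible_domain negligible_range
    by (simp add: absolutely_integrable_spike_set_eq[OF domain] absolutely_integrable_spike_set_eq[OF range])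
  assume F: "F absolutely_integrable_on {\<nu> a..\<nu> b}"
  have "integral {a..b} (\<lambda>x. q x *\<^sub>R F (\<nu> x)) = integral S (\<lambda>x. \<bar>q x\<bar> *\<^sub>R F (\<nu> x))"
    using S_sub negligible_domain by (simp add: abs_q integral_spike_set[OF domain] cong: integral_cong)
  also have "\<dots> = integral (\<nu> ` S) F"
    using has_absolute_integral_change_of_variables_real[OF S deriv inj, of F "integral (\<nu> ` S) F"] F
      S_sub negligible_range
    by (simp add: absolutely_integrable_spike_set_eq[OF range])
  also have "\<dots> = integral {\<nu> a..\<nu> b} F"
    using S_sub negligible_range by (simp add: integral_spike_set[OF range])
  finally show "integral {a..b} (\<lambda>x. q x *\<^sub>R F (\<nu> x)) = integral {\<nu> a..\<nu> b} F" .
qed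

lemma \<nu>_diff_eq_integral:
  assumes "a \<le> b"
  shows "\<nu> b - \<nu> a = integral {a..b} q"
proof -
  have "(\<lambda>_. 1::real) absolutely_integrable_on {\<nu> a..\<nu> b}"
    by (rule absolutely_integrable_on_bounded_measurable[where B=1]) auto
  from integral_substitution_\<nu>[OF this] show ?thesis
    using assms by simp
qed

lemma \<nu>_add_pi: "\<nu> (x + pi) = \<nu> x + pi"
proof -
  have shift_invariant: "\<nu> (y + pi) - \<nu> y = \<nu> (x + pi) - \<nu> x" if "x \<le> y" for x y
  proof -
    have "q \<circ> (+) pi = q"
      by (auto simp: q_def p_periodic add.commute)
    then have "integral {x..y} q = integral {x + pi..y + pi} q"
      using integral_shift_Icc_real[of x y q pi] by simp
    then show ?thesis
      using \<nu>_diff_eq_integral[of x y] \<nu>_diff_eq_integral[of "x + pi" "y + pi"] that by simp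
  qed
  have shift: "\<nu> (y + pi) - \<nu> y = \<nu> pi" for y
    using shift_invariant[of 0 y] shift_invariant[of y 0] \<nu>_0 by (cases "0 \<le> y") auto
  have "integral {0..2*pi} q = integral {0..2*pi} p / m"
    unfolding q_def[abs_def] by (simp add: integral_divide)
  moreover have "integral {0..2*pi} p = 2 * pi * m"
    by (simp add: m_eq)
  ultimately have "integral {0..2*pi} q = 2 * pi"
    using m_pos by simp
  then have "\<nu> (2*pi) = 2 * pi"
    using \<nu>_diff_eq_integral[of 0 "2*pi"] \<nu>_0 by simp
  then have "\<nu> pi = pi"
    using shift[of pi] by simp
  then show ?thesis
    using shift[of x] by simp
qed

lemma \<nu>_pi: "\<nu> pi = pi"
  using \<nu>_add_pi[of 0] \<nu>_0 by simp

lemma \<nu>_mem_0_pi: "x \<in> {0..pi} \<Longrightarrow> \<nu> x \<in> {0..pi}"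
  using \<nu>_le_iff[of 0 x] \<nu>_le_iff[of x pi] by (simp add: \<nu>_0 \<nu>_pi)

lemma weighted_tail_integral:
  fixes g d :: "real \<Rightarrow> 'a::euclidean_space"
  assumes g: "g absolutely_integrable_on {0..pi}" and N: "negligible N"
    and d_eq: "\<And>x. x \<in> {0..pi} - N \<Longrightarrow> d x = g (\<nu> x)" and a: "a \<in> {0..pi}"
  shows "(\<lambda>b. p b *\<^sub>R d b) absolutely_integrable_on {a..pi}"
    and "integral {a..pi} (\<lambda>b. p b *\<^sub>R d b) = m *\<^sub>R integral {\<nu> a..pi} g"
proof -
  have "g absolutely_integrable_on {\<nu> a..\<nu> pi}"
    using \<nu>_mem_0_pi[OF a] by (intro absolutely_integrable_on_subinterval[OF g]) (auto simp: \<nu>_pi)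
  then have substituted: "(\<lambda>x. q x *\<^sub>R g (\<nu> x)) absolutely_integrable_on {a..pi}"
      "integral {a..pi} (\<lambda>x. q x *\<^sub>R g (\<nu> x)) = integral {\<nu> a..pi} g"
    using absolutely_integrable_substitution_\<nu>[of a pi g] integral_substitution_\<nu>[of a pi g]
    by (simp_all add: \<nu>_pi)
  have pd_eq: "p b *\<^sub>R d b = m *\<^sub>R (q b *\<^sub>R g (\<nu> b))" if "b \<in> {a..pi} - N" for b
    using that a d_eq[of b] m_pos by (simp add: q_def)
  show "(\<lambda>b. p b *\<^sub>R d b) absolutely_integrable_on {a..pi}"
    by (rule absolutely_integrable_spike[OF absolutely_integrable_scaleR_left[OF substituted(1)] N])
      (use pd_eq in auto)
  have "integral {a..pi} (\<lambda>b. p b *\<^sub>R d b) = integral {a..pi} (\<lambda>b. m *\<^sub>R (q b *\<^sub>R g (\<nu> b)))"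
    by (rule integral_spike[OF N]) (use pd_eq in auto)
  also have "\<dots> = m *\<^sub>R integral {a..pi} (\<lambda>b. q b *\<^sub>R g (\<nu> b))"
    by (rule integral_cmul)
  finally show "integral {a..pi} (\<lambda>b. p b *\<^sub>R d b) = m *\<^sub>R integral {\<nu> a..pi} g"
    by (simp only: substituted(2))
qed

lemma omega_eq_tail_cross_integral:
  fixes g d :: "real \<Rightarrow> complex"
  assumes g: "g absolutely_integrable_on {0..pi}" "\<And>s. s \<in> {0..pi} \<Longrightarrow> cmod (g s) \<le> 1"
    and N: "negligible N" and d_eq: "\<And>x. x \<in> {0..pi} - N \<Longrightarrow> d x = g (\<nu> x)"
  shows "omega p d = m\<^sup>2 * tail_cross_integral g"
proof -
  define E where "E a = integral {a..pi} (\<lambda>b. p b *\<^sub>R d b)" for a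
  define \<Phi> where "\<Phi> s = cross2 (g s) (integral {s..pi} g)" for s
  have tail: "(\<lambda>b. p b *\<^sub>R d b) absolutely_integrable_on {a..pi}"
      "integral {a..pi} (\<lambda>b. p b *\<^sub>R d b) = m *\<^sub>R integral {\<nu> a..pi} g" if "a \<in> {0..pi}" for a
    using weighted_tail_integral[OF g(1) N _ that, of d] d_eq by auto
  have inner: "(\<integral>b\<in>{a..pi}. p a * p b * cross2 (d a) (d b) \<partial>lebesgue) = p a * cross2 (d a) (E a)"
    if "a \<in> {0..pi}" for a
    unfolding E_def by (rule set_integral_cross2_scaleR[OF tail(1)[OF that]])
  have outer: "p a * cross2 (d a) (E a) = m\<^sup>2 *\<^sub>R (q a *\<^sub>R \<Phi> (\<nu> a))" if "a \<in> {0..pi} - N" for a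
    using that d_eq[OF that] tail(2)[of a] m_pos
    by (simp add: E_def \<Phi>_def q_def cross2_scaleR_right power2_eq_square)
  have "\<Phi> absolutely_integrable_on {0..pi}"
    unfolding \<Phi>_def by (rule tail_cross_integrand_absolutely_integrable[OF g])
  then have substituted: "(\<lambda>a. q a *\<^sub>R \<Phi> (\<nu> a)) absolutely_integrable_on {0..pi}"
      "integral {0..pi} (\<lambda>a. q a *\<^sub>R \<Phi> (\<nu> a)) = integral {0..pi} \<Phi>"
    using absolutely_integrable_substitution_\<nu>[of 0 pi \<Phi>] integral_substitution_\<nu>[of 0 pi \<Phi>]
    by (auto simp: \<nu>_0 \<nu>_pi)
  have "omega p d = (\<integral>a\<in>{0..pi}. p a * cross2 (d a) (E a) \<partial>lebesgue)"
    unfolding omega_def by (rule set_lebesgue_integral_cong) (auto simp: inner)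
  also have "\<dots> = integral {0..pi} (\<lambda>a. p a * cross2 (d a) (E a))"
    by (rule set_lebesgue_integral_eq_integral(2),
        rule absolutely_integrable_spike[OF absolutely_integrable_scaleR_left[OF substituted(1)] N])
      (use outer in auto)
  also have "\<dots> = integral {0..pi} (\<lambda>a. m\<^sup>2 *\<^sub>R (q a *\<^sub>R \<Phi> (\<nu> a)))"
    by (rule integral_spike[OF N]) (use outer in auto)
  also have "\<dots> = m\<^sup>2 * integral {0..pi} \<Phi>"
    by (simp only: integral_cmul substituted(2)) simp
  finally show ?thesis
    unfolding tail_cross_integral_def \<Phi>_def .
qed

definition \<gamma> :: "real \<Rightarrow> complex" where
  "\<gamma> a = exp (\<i> * of_real (\<nu> a))"

lemma \<gamma>_in_Bap: "\<gamma> \<in> Bap"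
  unfolding Bap_def
proof (intro CollectI conjI allI)
  have "continuous_on UNIV \<gamma>"
    unfolding \<gamma>_def[abs_def] using continuous_on_\<nu> by (intro continuous_intros)
  then show "\<gamma> \<in> borel_measurable lebesgue"
    using continuous_imp_measurable_on_sets_lebesgue[of UNIV \<gamma>] by (simp add: lebesgue_on_UNIV_eq)
  show "AE x in lebesgue. (Re (\<gamma> x))\<^sup>2 + (Im (\<gamma> x))\<^sup>2 \<le> 1"
    by (simp add: \<gamma>_def Re_exp Im_exp)
  show "\<gamma> (a + pi) = - \<gamma> a" for a
    by (simp add: \<gamma>_def \<nu>_add_pi distrib_left exp_add)
qed

lemma omega_\<gamma>: "omega p \<gamma> = m\<^sup>2 * pi"
proof -
  have "omega p \<gamma> = m\<^sup>2 * tail_cross_integral (\<lambda>s. exp (\<i> * of_real s))"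
    by (rule omega_eq_tail_cross_integral[where N="{}"])
      (auto simp: \<gamma>_def intro!: absolutely_integrable_continuous_real continuous_intros)
  then show ?thesis
    by (simp add: tail_cross_integral_exp_i)
qed

lemma Bap_reparametrisation:
  assumes "d \<in> Bap"
  obtains g N where "g absolutely_integrable_on {0..pi}" "\<And>s. s \<in> {0..pi} \<Longrightarrow> cmod (g s) \<le> 1"
    "negligible N" "\<And>x. x \<notin> N \<Longrightarrow> d x = g (\<nu> x)"
proof -
  have d_meas: "d \<in> borel_measurable lebesgue"
    and "AE x in lebesgue. (Re (d x))\<^sup>2 + (Im (d x))\<^sup>2 \<le> 1"
    using assms by (auto simp: Bap_def)
  then obtain N where N: "negligible N" and d_le_1: "\<And>x. x \<notin> N \<Longrightarrow> cmod (d x) \<le> 1"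
    unfolding eventually_ae_filter_negligible by (auto simp: cmod_def)
  txt \<open>\<open>d\<close> is cut off where it exceeds the unit disc, so that \<open>g\<close> is bounded everywhere.\<close>
  define d' where "d' x = (if cmod (d x) \<le> 1 then d x else 0)" for x
  define g where "g = d' \<circ> inv \<nu>"
  have g_\<nu>: "g (\<nu> x) = d' x" for x
    by (simp add: g_def inv_f_f[OF inj_\<nu>])
  have "(\<lambda>x. q x *\<^sub>R d' x) absolutely_integrable_on {0..pi}"
  proof (rule measurable_bounded_by_integrable_imp_absolutely_integrable)
    have [measurable]: "d \<in> borel_measurable (lebesgue_on {0..pi})"
      using d_meas by (rule measurable_restrict_space1)
    have [measurable]: "q \<in> borel_measurable (lebesgue_on {0..pi})"
      using q_integrable by (simp add: absolutely_integrable_measurable)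
    show "(\<lambda>x. q x *\<^sub>R d' x) \<in> borel_measurable (lebesgue_on {0..pi})"
      unfolding d'_def by measurable
    show "(\<lambda>x. norm (q x)) integrable_on {0..pi}"
      using q_integrable by (simp add: absolutely_integrable_on_def)
    show "norm (q x *\<^sub>R d' x) \<le> norm (q x)" for x
      by (auto simp: d'_def mult_left_le)
  qed auto
  then have "g absolutely_integrable_on {0..pi}"
    using absolutely_integrable_substitution_\<nu>[of 0 pi g] by (simp add: g_\<nu> \<nu>_0 \<nu>_pi)
  moreover have "cmod (g s) \<le> 1" for s
    by (simp add: g_def d'_def)
  moreover have "d x = g (\<nu> x)" if "x \<notin> N" for x
    using d_le_1[OF that] by (simp add: g_\<nu> d'_def)
  ultimately show ?thesis
    using that N by blast
qed

lemma omega_le_of_Bap: "d \<in> Bap \<Longrightarrow> omega p d \<le> m\<^sup>2 * pi"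
proof -
  assume "d \<in> Bap"
  then obtain g N where g: "g absolutely_integrable_on {0..pi}" "\<And>s. s \<in> {0..pi} \<Longrightarrow> cmod (g s) \<le> 1"
    and N: "negligible N" "\<And>x. x \<notin> N \<Longrightarrow> d x = g (\<nu> x)"
    using Bap_reparametrisation by blast
  then have "omega p d = m\<^sup>2 * tail_cross_integral g"
    by (intro omega_eq_tail_cross_integral) auto
  also have "\<dots> \<le> m\<^sup>2 * pi"
    using tail_cross_integral_le_pi[OF g] by (intro mult_left_mono) auto
  finally show ?thesis .
qed

lemma omega_eq_max_imp_rotation:
  assumes d: "d \<in> Bap" and max: "omega p d = m\<^sup>2 * pi"
  obtains c where "AE x in lebesgue. d x = exp (\<i> * of_real (\<nu> x + c))"
proof -
  obtain g N where g: "g absolutely_integrable_on {0..pi}" "\<And>s. s \<in> {0..pi} \<Longrightarrow> cmod (g s) \<le> 1"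
    and N: "negligible N" and d_eq: "\<And>x. x \<notin> N \<Longrightarrow> d x = g (\<nu> x)"
    using Bap_reparametrisation[OF d] by blast
  have "omega p d = m\<^sup>2 * tail_cross_integral g"
    using g N d_eq by (intro omega_eq_tail_cross_integral) auto
  then have "tail_cross_integral g = pi"
    using max m_pos by simp
  then obtain c N' where N': "negligible N'"
    and g_eq: "\<And>s. s \<in> {0..pi} - N' \<Longrightarrow> g s = exp (\<i> * of_real (s + c))"
    using tail_cross_integral_eq_pi_imp_rotation[OF g] by blast
  have "AE x in lebesgue. d x = exp (\<i> * of_real (\<nu> x + c))"
  proof (rule AE_eq_if_antiperiodic[OF _ _ negligible_Un[OF N negligible_\<nu>_vimage[OF N']]])
    show "d (x + pi) = - d x" for x
      using d by (simp add: Bap_def)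
    have "\<i> * of_real (\<nu> (x + pi) + c) = \<i> * of_real (\<nu> x + c) + \<i> * of_real pi" for x
      unfolding \<nu>_add_pi by (simp add: algebra_simps)
    then show "exp (\<i> * of_real (\<nu> (x + pi) + c)) = - exp (\<i> * of_real (\<nu> x + c))" for x
      by (simp add: exp_add)
    show "d x = exp (\<i> * of_real (\<nu> x + c))" if "x \<in> {0..pi} - (N \<union> \<nu> -` N')" for x
      using that d_eq g_eq[of "\<nu> x"] \<nu>_mem_0_pi[of x] by auto
  qed
  then show ?thesis
    by (rule that)
qed

lemma rotated_\<gamma>_has_vector_derivative:
  assumes "x \<in> regular_points"
  shows "((\<lambda>a. exp (\<i> * of_real (\<nu> a + c))) has_vector_derivative
      \<i> * of_real (q x) * exp (\<i> * of_real (\<nu> x + c))) (at x)"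
proof -
  have "((\<lambda>a. of_real (\<nu> a + c)) has_vector_derivative of_real (q x)) (at x)"
    using assms unfolding regular_points_def by (auto intro!: derivative_eq_intros)
  moreover have "((\<lambda>z. exp (\<i> * z)) has_field_derivative \<i> * exp (\<i> * of_real (\<nu> x + c)))
      (at (of_real (\<nu> x + c)))"
    by (auto intro!: derivative_eq_intros simp: mult.commute)
  ultimately have "((\<lambda>z. exp (\<i> * z)) \<circ> (\<lambda>a. of_real (\<nu> a + c)) has_vector_derivative
      of_real (q x) * (\<i> * exp (\<i> * of_real (\<nu> x + c)))) (at x)"
    by (rule field_vector_diff_chain_at)
  then show ?thesis
    unfolding o_def by (simp add: ac_simps)
qed

lemma half_turn_integral:
  "(1/2) * (\<integral>b\<in>{a..a+pi}. of_real (p b) * \<gamma> b \<partial>lebesgue) = \<i> * (of_real m * \<gamma> a)"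
proof -
  define E :: "real \<Rightarrow> complex" where "E s = exp (\<i> * of_real s)" for s
  have E: "E absolutely_integrable_on {\<nu> a..\<nu> (a + pi)}"
    unfolding E_def by (intro absolutely_integrable_continuous_real continuous_intros)
  have "integral {\<nu> a..\<nu> (a + pi)} E = - \<i> * (exp (\<i> * of_real (\<nu> a + pi)) - exp (\<i> * of_real (\<nu> a)))"
    unfolding E_def[abs_def] \<nu>_add_pi by (rule integral_exp_i) simp
  also have "\<dots> = 2 * \<i> * \<gamma> a"
    by (simp add: \<gamma>_def distrib_left exp_add)
  finally have "integral {\<nu> a..\<nu> (a + pi)} E = 2 * \<i> * \<gamma> a" .
  have pointwise: "of_real (p b) * \<gamma> b = m *\<^sub>R (q b *\<^sub>R E (\<nu> b))" for b
    using m_pos by (simp add: E_def \<gamma>_def q_def scaleR_conv_of_real)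
  have "(\<lambda>b. q b *\<^sub>R E (\<nu> b)) absolutely_integrable_on {a..a+pi}"
    using E absolutely_integrable_substitution_\<nu> by blast
  then have "(\<integral>b\<in>{a..a+pi}. of_real (p b) * \<gamma> b \<partial>lebesgue)
      = integral {a..a+pi} (\<lambda>b. m *\<^sub>R (q b *\<^sub>R E (\<nu> b)))"
    unfolding pointwise by (intro set_lebesgue_integral_eq_integral(2) absolutely_integrable_scaleR_left)
  also have "\<dots> = m *\<^sub>R integral {a..a+pi} (\<lambda>b. q b *\<^sub>R E (\<nu> b))"
    by (rule integral_cmul)
  also have "\<dots> = m *\<^sub>R (2 * \<i> * \<gamma> a)"
    using integral_substitution_\<nu>[OF E] \<open>integral {\<nu> a..\<nu> (a + pi)} E = 2 * \<i> * \<gamma> a\<close> by simp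
  finally show ?thesis
    by (simp add: scaleR_conv_of_real)
qed

lemma area_half_turn_curve:
  "area02pi (\<lambda>a. (1/2) * (\<integral>b\<in>{a..a+pi}. of_real (p b) * \<gamma> b \<partial>lebesgue)) = m\<^sup>2 * pi"
proof -
  define \<sigma> where "\<sigma> a = \<i> * (of_real m * \<gamma> a)" for a
  have cross: "cross2 (\<sigma> x) (vector_derivative \<sigma> (at x)) = m\<^sup>2 * q x" if "x \<in> regular_points" for x
  proof -
    have "(\<sigma> has_vector_derivative - (of_real (q x) * (of_real m * \<gamma> x))) (at x)"
      using has_vector_derivative_mult_right[OF rotated_\<gamma>_has_vector_derivative[OF that, of 0],
          of "\<i> * of_real m"]
      by (simp add: \<sigma>_def[abs_def] \<gamma>_def algebra_simps)
    then show ?thesis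
      using cross2_rotation[of "of_real m * \<gamma> x" "q x"]
      by (simp add: vector_derivative_at \<sigma>_def norm_mult \<gamma>_def power2_eq_square)
  qed
  have integrable: "(\<lambda>x. m\<^sup>2 *\<^sub>R q x) absolutely_integrable_on {0..2*pi}"
    by (rule absolutely_integrable_scaleR_left[OF q_integrable])
  have "(\<integral>a\<in>{0..2*pi}. cross2 (\<sigma> a) (vector_derivative \<sigma> (at a)) \<partial>lebesgue)
      = integral {0..2*pi} (\<lambda>a. cross2 (\<sigma> a) (vector_derivative \<sigma> (at a)))"
    by (rule set_lebesgue_integral_eq_integral(2),
        rule absolutely_integrable_spike[OF integrable negligible_irregular_points]) (auto simp: cross)
  also have "\<dots> = integral {0..2*pi} (\<lambda>x. m\<^sup>2 *\<^sub>R q x)"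
    by (rule integral_spike[OF negligible_irregular_points]) (auto simp: cross)
  also have "\<dots> = m\<^sup>2 * (2 * pi)"
    using \<nu>_diff_eq_integral[of 0 "2*pi"] \<nu>_add_pi[of pi] \<nu>_pi \<nu>_0 by simp
  finally show ?thesis
    unfolding area02pi_def half_turn_integral \<sigma>_def[symmetric] by simp
qed

lemma rotated_\<gamma>_speed:
  "AE x in lebesgue. \<exists>D. ((\<lambda>a. exp (\<i> * of_real (\<nu> a + c))) has_vector_derivative D) (at x)
     \<and> cmod D = p x / m \<and> (\<nu> has_real_derivative p x / m) (at x)"
proof -
  have "\<exists>D. ((\<lambda>a. exp (\<i> * of_real (\<nu> a + c))) has_vector_derivative D) (at x)
      \<and> cmod D = p x / m \<and> (\<nu> has_real_derivative p x / m) (at x)" if "x \<in> regular_points" for x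
  proof -
    have "0 < q x" "(\<nu> has_real_derivative q x) (at x)"
      using that by (auto simp: regular_points_def)
    moreover have "cmod (\<i> * of_real (q x) * exp (\<i> * of_real (\<nu> x + c))) = q x"
      using \<open>0 < q x\<close> by (simp add: norm_mult del: of_real_add)
    ultimately show ?thesis
      using rotated_\<gamma>_has_vector_derivative[OF that, of c] unfolding q_def by blast
  qed
  then show ?thesis
    unfolding eventually_ae_filter_negligible using negligible_irregular_points by blast
qed

end

theorem lemma3p9:
  fixes p :: "real \<Rightarrow> real" and \<nu> :: "real \<Rightarrow> real"
  assumes p_locint: "\<And>a b. set_integrable lebesgue {a..b} p"
    and p_per: "\<And>x. p (x + pi) = p x"
    and p_pos: "AE x in lebesgue. p x > 0"
    and \<nu>_bilip: "\<exists>L>0. \<forall>x y. \<bar>x - y\<bar> \<le> L * \<bar>\<nu> x - \<nu> y\<bar> \<and> \<bar>\<nu> x - \<nu> y\<bar> \<le> L * \<bar>x - y\<bar>"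
    and \<nu>0: "\<nu> 0 = 0"
    and \<nu>_deriv: "AE x in lebesgue.
          (\<nu> has_real_derivative
             p x / ((1 / (2*pi)) * (\<integral>b\<in>{0..2*pi}. p b \<partial>lebesgue))) (at x)"
  shows "(\<lambda>a. exp (\<i> * complex_of_real (\<nu> a))) \<in> Bap
    \<and> (\<forall>d\<in>Bap. omega p d \<le> omega p (\<lambda>a. exp (\<i> * complex_of_real (\<nu> a))))
    \<and> omega p (\<lambda>a. exp (\<i> * complex_of_real (\<nu> a))) = (SUP d\<in>Bap. omega p d)
    \<and> omega p (\<lambda>a. exp (\<i> * complex_of_real (\<nu> a)))
        = area02pi (\<lambda>a. (1/2) * (\<integral>b\<in>{a..a+pi}.
              complex_of_real (p b) * exp (\<i> * complex_of_real (\<nu> b)) \<partial>lebesgue))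
    \<and> omega p (\<lambda>a. exp (\<i> * complex_of_real (\<nu> a)))
        = (1 / (4*pi)) * (\<integral>b\<in>{0..2*pi}. p b \<partial>lebesgue)\<^sup>2
    \<and> (\<forall>d\<in>Bap. omega p d = (SUP e\<in>Bap. omega p e) \<longrightarrow>
         (\<exists>c::real. (AE x in lebesgue. d x = exp (\<i> * complex_of_real (\<nu> x + c)))
            \<and> (AE x in lebesgue. \<exists>D.
                 ((\<lambda>a. exp (\<i> * complex_of_real (\<nu> a + c))) has_vector_derivative D) (at x)
                 \<and> cmod D = p x / ((1 / (2*pi)) * (\<integral>b\<in>{0..2*pi}. p b \<partial>lebesgue))
                 \<and> (\<nu> has_real_derivative
                      p x / ((1 / (2*pi)) * (\<integral>b\<in>{0..2*pi}. p b \<partial>lebesgue))) (at x))))"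
proof -
  define m where "m = (1 / (2*pi)) * (\<integral>b\<in>{0..2*pi}. p b \<partial>lebesgue)"
  interpret normalized_primitive p \<nu> m
    using assms by unfold_locales (auto simp: m_def set_lebesgue_integral_eq_integral(2))
  have maximum: "\<forall>d\<in>Bap. omega p d \<le> omega p \<gamma>"
    using omega_le_of_Bap omega_\<gamma> by simp
  then have sup: "(SUP d\<in>Bap. omega p d) = omega p \<gamma>"
    using \<gamma>_in_Bap by (intro cSup_eq_maximum) auto
  have "(1 / (4*pi)) * (\<integral>b\<in>{0..2*pi}. p b \<partial>lebesgue)\<^sup>2 = m\<^sup>2 * pi"
    by (simp add: m_def power2_eq_square)
  moreover have "\<forall>d\<in>Bap. omega p d = (SUP e\<in>Bap. omega p e) \<longrightarrow>
      (\<exists>c. (AE x in lebesgue. d x = exp (\<i> * of_real (\<nu> x + c)))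
        \<and> (AE x in lebesgue. \<exists>D. ((\<lambda>a. exp (\<i> * of_real (\<nu> a + c))) has_vector_derivative D) (at x)
            \<and> cmod D = p x / m \<and> (\<nu> has_real_derivative p x / m) (at x)))"
    using omega_eq_max_imp_rotation rotated_\<gamma>_speed by (metis sup omega_\<gamma>)
  ultimately show ?thesis
    using \<gamma>_in_Bap maximum sup omega_\<gamma> area_half_turn_curve
    unfolding m_def[symmetric] \<gamma>_def by simp
qed

end
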